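(* Let $f:2^V\to\mathbb{R}_+$ be a nonnegative supermodular function that is $r$-decomposable (not necessarily monotone), and let $k$ be an integer with $r<k\le n-1$. Run the following algorithm: $S_n\gets V$; for $i=n,\dots,k+1$, choose $v_i\in\arg\min_{v\in S_i}f(v\mid S_i\setminus\{v\})$ and set $S_{i-1}\gets S_i\setminus\{v_i\}$; output whichever of $S_k$ and $\emptyset$ has the larger function value. This algorithm achieves an approximation ratio of $O(n^{r-1}/k^{r-1})$ for the $\underline{k}$SPM problem on $f$.
   Context: $V$ is a finite set with $n=|V|$; $f(v\mid S)=f(S\cup\{v\})-f(S)$. Supermodular: $f(A)+f(B)\le f(A\cup B)+f(A\cap B)$. $f$ is $r$-decomposable if there exist $V_1,\dots,V_m\subseteq V$ with $|V_i|\le r$ and nonnegative supermodular $f_i:2^{V_i}\to\mathbb{R}_+$ with $f(S)=\sum_i f_i(S\cap V_i)$ for all $S$. The $\underline{k}$SPM problem asks for $S\subseteq V$ with $|S|\le k$ maximizing $f(S)$; approximation ratio $\rho$ means $\mathrm{OPT}\le\rho f(\text{output})$, constants in $O(\cdot)$ depending only on $r$. *)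

theory Defs
  imports Complex_Main
begin

text \<open>Set functions are modelled as total functions on sets; only their values on
subsets of the ground set matter.\<close>

definition supermodular_on :: "'a set \<Rightarrow> ('a set \<Rightarrow> real) \<Rightarrow> bool" where
  "supermodular_on V f \<longleftrightarrow>
     (\<forall>A B. A \<subseteq> V \<longrightarrow> B \<subseteq> V \<longrightarrow> f A + f B \<le> f (A \<union> B) + f (A \<inter> B))"

definition nonneg_on :: "'a set \<Rightarrow> ('a set \<Rightarrow> real) \<Rightarrow> bool" where
  "nonneg_on V f \<longleftrightarrow> (\<forall>A. A \<subseteq> V \<longrightarrow> 0 \<le> f A)"

definition decomposable :: "nat \<Rightarrow> 'a set \<Rightarrow> ('a set \<Rightarrow> real) \<Rightarrow> bool" where
  "decomposable r V f \<longleftrightarrow>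
     (\<exists>(m::nat) (Vs :: nat \<Rightarrow> 'a set) (fs :: nat \<Rightarrow> 'a set \<Rightarrow> real).
        (\<forall>i<m. Vs i \<subseteq> V \<and> card (Vs i) \<le> r \<and>
               nonneg_on (Vs i) (fs i) \<and> supermodular_on (Vs i) (fs i)) \<and>
        (\<forall>S. S \<subseteq> V \<longrightarrow> f S = (\<Sum>i<m. fs i (S \<inter> Vs i))))"

definition marginal :: "('a set \<Rightarrow> real) \<Rightarrow> 'a \<Rightarrow> 'a set \<Rightarrow> real" where
  "marginal f v S = f (S \<union> {v}) - f S"

definition greedy_run :: "'a set \<Rightarrow> ('a set \<Rightarrow> real) \<Rightarrow> nat \<Rightarrow> (nat \<Rightarrow> 'a set) \<Rightarrow> bool" where
  "greedy_run V f k S \<longleftrightarrow>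
     S (card V) = V \<and>
     (\<forall>i. k < i \<and> i \<le> card V \<longrightarrow>
        (\<exists>v\<in>S i. (\<forall>u\<in>S i. marginal f v (S i - {v}) \<le> marginal f u (S i - {u}))
                 \<and> S (i - 1) = S i - {v}))"

definition greedy_value :: "('a set \<Rightarrow> real) \<Rightarrow> nat \<Rightarrow> (nat \<Rightarrow> 'a set) \<Rightarrow> real" where
  "greedy_value f k S = max (f (S k)) (f {})"

end

theory Submission
  imports Defs
begin

text \<open>
  Decomposability bounds the total removal gain: the sum over v in T of f(v | T - v) is at most
  r f(T), since each part f_i only sees the at most r elements of V_i. As the backward greedy
  removes an element of least gain, (i - r) f(S_i) <= i f(S_(i-1)), so f(S_i) / (i choose r)
  does not decrease as i goes down to k.

  For a feasible X put \<tau> = f(X) / (2k) and let Z maximise f(W) - |W| \<tau> over W contained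
  in X; then f(X) <= 2 f(Z) and every element of Z has gain at least \<tau> in Z. If Z lies in S_k,
  supermodularity and nonnegativity give f(Z) <= f(S_k) + f({}). Otherwise let i be the step
  removing the first element v of Z. By supermodularity v gains at least \<tau> in S_i, hence so
  does every element of S_i, and i \<tau> <= r f(S_i) <= r f(S_k) (i choose r) / (k choose r);
  with (k/r)^r <= (k choose r) and (i choose r) <= i^r this is f(X) <= 2 r^(r+1) (n/k)^(r-1) f(S_k).
\<close>

lemma supermodular_onD:
  "supermodular_on V f \<Longrightarrow> A \<subseteq> V \<Longrightarrow> B \<subseteq> V \<Longrightarrow> f A + f B \<le> f (A \<union> B) + f (A \<inter> B)"
  unfolding supermodular_on_def by blast

lemma nonneg_onD: "nonneg_on V f \<Longrightarrow> A \<subseteq> V \<Longrightarrow> 0 \<le> f A"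
  unfolding nonneg_on_def by blast

lemma marginal_remove: "v \<in> T \<Longrightarrow> marginal f v (T - {v}) = f T - f (T - {v})"
  unfolding marginal_def by (simp add: insert_absorb)

lemma sum_removal_restrict_le:
  assumes "finite T" "finite W" "card W \<le> r" "nonneg_on W g"
  shows "(\<Sum>v\<in>T. g (T \<inter> W) - g ((T - {v}) \<inter> W)) \<le> real r * g (T \<inter> W)"
proof -
  have "(\<Sum>v\<in>T. g (T \<inter> W) - g ((T - {v}) \<inter> W))
      \<le> (\<Sum>v\<in>T. if v \<in> W then g (T \<inter> W) else 0)"
  proof (rule sum_mono)
    fix v assume "v \<in> T"
    show "g (T \<inter> W) - g ((T - {v}) \<inter> W) \<le> (if v \<in> W then g (T \<inter> W) else 0)"
    proof (cases "v \<in> W")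
      case True
      then show ?thesis using nonneg_onD[OF assms(4), of "(T - {v}) \<inter> W"] by auto
    next
      case False
      then have "(T - {v}) \<inter> W = T \<inter> W" by blast
      then show ?thesis using False by simp
    qed
  qed
  also have "\<dots> = (\<Sum>v\<in>T \<inter> W. g (T \<inter> W))"
    using assms(1) by (rule sum.inter_restrict[symmetric])
  also have "\<dots> = real (card (T \<inter> W)) * g (T \<inter> W)"
    by simp
  also have "\<dots> \<le> real r * g (T \<inter> W)"
  proof (rule mult_right_mono)
    show "real (card (T \<inter> W)) \<le> real r"
      using card_mono[OF assms(2), of "T \<inter> W"] assms(3) by simp
  qed (simp add: nonneg_onD[OF assms(4)])
  finally show ?thesis .
qed

lemma decomposableE:
  assumes "decomposable r V f"
  obtains m :: nat and Vs fs where
    "\<And>i. i < m \<Longrightarrow> Vs i \<subseteq> V" "\<And>i. i < m \<Longrightarrow> card (Vs i) \<le> r"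
    "\<And>i. i < m \<Longrightarrow> nonneg_on (Vs i) (fs i)"
    "\<And>S. S \<subseteq> V \<Longrightarrow> f S = (\<Sum>i<m. fs i (S \<inter> Vs i))"
  using assms unfolding decomposable_def by metis

lemma decomposable_sum_marginals_le:
  assumes "finite V" "decomposable r V f" "T \<subseteq> V"
  shows "(\<Sum>v\<in>T. marginal f v (T - {v})) \<le> real r * f T"
proof -
  obtain m :: nat and Vs fs where parts: "\<And>i. i < m \<Longrightarrow> Vs i \<subseteq> V"
    "\<And>i. i < m \<Longrightarrow> card (Vs i) \<le> r" "\<And>i. i < m \<Longrightarrow> nonneg_on (Vs i) (fs i)"
    and f_eq: "\<And>S. S \<subseteq> V \<Longrightarrow> f S = (\<Sum>i<m. fs i (S \<inter> Vs i))"
    using decomposableE[OF assms(2)] by blast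
  have T_fin: "finite T" using assms(1,3) finite_subset by blast
  have "(\<Sum>v\<in>T. marginal f v (T - {v}))
      = (\<Sum>v\<in>T. \<Sum>i<m. fs i (T \<inter> Vs i) - fs i ((T - {v}) \<inter> Vs i))"
  proof (rule sum.cong)
    fix v assume "v \<in> T"
    moreover have "T - {v} \<subseteq> V" using assms(3) by blast
    ultimately show "marginal f v (T - {v}) = (\<Sum>i<m. fs i (T \<inter> Vs i) - fs i ((T - {v}) \<inter> Vs i))"
      using f_eq[OF assms(3)] f_eq[of "T - {v}"] by (simp add: marginal_remove sum_subtractf)
  qed simp
  also have "\<dots> = (\<Sum>i<m. \<Sum>v\<in>T. fs i (T \<inter> Vs i) - fs i ((T - {v}) \<inter> Vs i))"
    by (rule sum.swap)
  also have "\<dots> \<le> (\<Sum>i<m. real r * fs i (T \<inter> Vs i))"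
  proof (rule sum_mono)
    fix i assume "i \<in> {..<m}"
    then show "(\<Sum>v\<in>T. fs i (T \<inter> Vs i) - fs i ((T - {v}) \<inter> Vs i)) \<le> real r * fs i (T \<inter> Vs i)"
      using parts finite_subset[OF parts(1) assms(1)] by (intro sum_removal_restrict_le[OF T_fin]) auto
  qed
  also have "\<dots> = real r * f T"
    by (simp add: f_eq[OF assms(3)] sum_distrib_left)
  finally show ?thesis .
qed

lemma decomposable_uniform_marginals_le:
  assumes "finite V" "decomposable r V f" "T \<subseteq> V"
    and "\<forall>u\<in>T. \<tau> \<le> marginal f u (T - {u})"
  shows "real (card T) * \<tau> \<le> real r * f T"
proof -
  have "real (card T) * \<tau> = (\<Sum>u\<in>T. \<tau>)" by simp
  also have "\<dots> \<le> (\<Sum>u\<in>T. marginal f u (T - {u}))"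
    using assms(4) by (intro sum_mono) blast
  also have "\<dots> \<le> real r * f T"
    using assms(1-3) by (rule decomposable_sum_marginals_le)
  finally show ?thesis .
qed

lemma supermodular_on_marginal_mono:
  assumes "supermodular_on V f" "T \<subseteq> V" "Z \<subseteq> T" "v \<in> Z"
  shows "marginal f v (Z - {v}) \<le> marginal f v (T - {v})"
proof -
  have "f Z + f (T - {v}) \<le> f (Z \<union> (T - {v})) + f (Z \<inter> (T - {v}))"
    using assms(2,3) by (intro supermodular_onD[OF assms(1)]) auto
  moreover have "Z \<union> (T - {v}) = T" "Z \<inter> (T - {v}) = Z - {v}" "v \<in> T"
    using assms(3,4) by auto
  ultimately show ?thesis
    using assms(4) by (simp add: marginal_remove)
qed

lemma supermodular_on_subset_le:
  assumes "supermodular_on V f" "nonneg_on V f" "T \<subseteq> V" "Z \<subseteq> T"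
  shows "f Z \<le> f T + f {}"
proof -
  have "f Z + f (T - Z) \<le> f (Z \<union> (T - Z)) + f (Z \<inter> (T - Z))"
    using assms(3,4) by (intro supermodular_onD[OF assms(1)]) auto
  moreover have "Z \<union> (T - Z) = T" "Z \<inter> (T - Z) = {}"
    using assms(4) by auto
  moreover have "0 \<le> f (T - Z)"
    using assms(3) by (intro nonneg_onD[OF assms(2)]) auto
  ultimately show ?thesis by simp
qed

lemma exists_subset_marginals_ge:
  fixes f :: "'a set \<Rightarrow> real"
  assumes "finite X"
  obtains Z where "Z \<subseteq> X" "f X - real (card X) * \<tau> \<le> f Z - real (card Z) * \<tau>"
    "\<forall>v\<in>Z. \<tau> \<le> marginal f v (Z - {v})"
proof -
  define g where "g W = f W - real (card W) * \<tau>" for W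
  have fin: "finite (g ` Pow X)" using assms by simp
  have "Max (g ` Pow X) \<in> g ` Pow X" using fin by (intro Max_in) auto
  then obtain Z where Z: "Z \<subseteq> X" and Z_eq: "g Z = Max (g ` Pow X)" by auto
  have Z_max: "g W \<le> g Z" if "W \<subseteq> X" for W
    using Max_ge[OF fin] that Z_eq by auto
  have "\<tau> \<le> marginal f v (Z - {v})" if "v \<in> Z" for v
  proof -
    have "g (Z - {v}) \<le> g Z" using Z Z_max by blast
    moreover have "real (card Z) = real (card (Z - {v})) + 1"
      using arg_cong[OF card_Suc_Diff1[OF finite_subset[OF Z assms] that], of real] by simp
    ultimately show ?thesis
      by (simp add: g_def marginal_remove[OF that] algebra_simps)
  qed
  moreover have "g X \<le> g Z" using Z_max by blast
  ultimately show thesis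
    using that Z unfolding g_def by blast
qed

lemma binomial_ratio_decay:
  fixes a :: "nat \<Rightarrow> real"
  assumes "r \<le> k" "k \<le> i" "i \<le> n"
    and "\<And>j. k < j \<Longrightarrow> j \<le> n \<Longrightarrow> (real j - real r) * a j \<le> real j * a (j - 1)"
  shows "real (k choose r) * a i \<le> real (i choose r) * a k"
  using assms(2,3)
proof (induction i rule: dec_induct)
  case base
  then show ?case by (simp add: mult.commute)
next
  case (step j)
  have pos: "0 < real (Suc j) - real r" using assms(1) step.hyps by simp
  have absorb: "(real (Suc j) - real r) * real (Suc j choose r) = real (Suc j) * real (j choose r)"
    using binomial_absorb_comp[of "Suc j" r] assms(1) step.hyps
    by (metis diff_Suc_1 of_nat_diff of_nat_mult le_SucI order_trans)
  have "(real (Suc j) - real r) * (real (k choose r) * a (Suc j))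
      \<le> real (k choose r) * (real (Suc j) * a j)"
    using mult_left_mono[OF assms(4)[of "Suc j"], of "real (k choose r)"] step.hyps step.prems
    by (simp add: algebra_simps)
  also have "\<dots> \<le> real (Suc j) * (real (j choose r) * a k)"
    using mult_left_mono[OF step.IH, of "real (Suc j)"] step.prems by (simp add: algebra_simps)
  also have "\<dots> = (real (Suc j) - real r) * (real (Suc j choose r) * a k)"
    by (simp only: mult.assoc[symmetric] absorb)
  finally show ?case using pos by simp
qed

locale backward_greedy =
  fixes V :: "'a set" and f :: "'a set \<Rightarrow> real" and k :: nat and S :: "nat \<Rightarrow> 'a set"
  assumes finite_V: "finite V" and run: "greedy_run V f k S" and k_less_card: "k < card V"
begin

lemma greedy_start: "S (card V) = V"
  using run unfolding greedy_run_def by blast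

lemma greedy_step:
  assumes "k < j" "j \<le> card V"
  obtains v where "v \<in> S j" "\<forall>u\<in>S j. marginal f v (S j - {v}) \<le> marginal f u (S j - {u})"
    "S (j - 1) = S j - {v}"
  using run assms unfolding greedy_run_def by blast

lemma greedy_set:
  assumes "k \<le> j" "j \<le> card V"
  shows "S j \<subseteq> V" "card (S j) = j"
proof -
  have "S j \<subseteq> V \<and> card (S j) = j"
    using assms(2)
  proof (induction j rule: inc_induct)
    case base
    show ?case by (simp add: greedy_start)
  next
    case (step m)
    have "k < Suc m" "Suc m \<le> card V" using assms(1) step.hyps by auto
    then obtain v where "v \<in> S (Suc m)" "S (Suc m - 1) = S (Suc m) - {v}"
      by (rule greedy_step)
    with step.IH show ?case by auto
  qed
  then show "S j \<subseteq> V" "card (S j) = j" by auto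
qed

end

locale decomposable_backward_greedy = backward_greedy +
  fixes r :: nat
  assumes nonneg: "nonneg_on V f" and supermodular: "supermodular_on V f"
    and decomposable: "decomposable r V f" and r_less_k: "r < k"
begin

lemma greedy_step_ratio:
  assumes "k < j" "j \<le> card V"
  shows "(real j - real r) * f (S j) \<le> real j * f (S (j - 1))"
proof -
  obtain v where v: "v \<in> S j"
    and v_min: "\<forall>u\<in>S j. marginal f v (S j - {v}) \<le> marginal f u (S j - {u})"
    and S_prev: "S (j - 1) = S j - {v}"
    using greedy_step[OF assms] by blast
  have "real (card (S j)) * marginal f v (S j - {v}) \<le> real r * f (S j)"
    using decomposable_uniform_marginals_le[OF finite_V decomposable _ v_min] greedy_set assms
    by simp
  then show ?thesis
    unfolding S_prev using greedy_set(2) assms by (simp add: marginal_remove[OF v] algebra_simps)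
qed

lemma greedy_binomial_decay:
  assumes "k \<le> i" "i \<le> card V"
  shows "real (k choose r) * f (S i) \<le> real (i choose r) * f (S k)"
  by (rule binomial_ratio_decay[where n = "card V" and a = "\<lambda>j. f (S j)"])
    (use assms r_less_k greedy_step_ratio in auto)

lemma greedy_output_nonneg: "0 \<le> f (S k)"
  using greedy_set[of k] k_less_card by (intro nonneg_onD[OF nonneg]) auto

lemma greedy_min_gain_bound:
  assumes "k < i" "i \<le> card V" "0 < \<tau>" "\<forall>u\<in>S i. \<tau> \<le> marginal f u (S i - {u})"
  shows "real k * \<tau> \<le> real r ^ (r + 1) * (real (card V) / real k) ^ (r - 1) * f (S k)"
proof -
  have gain: "real i * \<tau> \<le> real r * f (S i)"
    using decomposable_uniform_marginals_le[OF finite_V decomposable _ assms(4)] greedy_set assms(1,2)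
    by simp
  obtain q where q: "r = Suc q"
  proof (cases r)
    case 0
    moreover have "0 < real i * \<tau>" using assms(1,3) by simp
    ultimately show thesis using gain by simp
  qed
  have "(real k / real r) ^ r * (real i * \<tau>) \<le> real (k choose r) * (real i * \<tau>)"
    using binomial_ge_n_over_k_pow_k[of r k] r_less_k assms(3) by (intro mult_right_mono) auto
  also have "\<dots> \<le> real (k choose r) * (real r * f (S i))"
    using gain by (intro mult_left_mono) auto
  also have "\<dots> = real r * (real (k choose r) * f (S i))"
    by simp
  also have "\<dots> \<le> real r * (real (i choose r) * f (S k))"
    using greedy_binomial_decay assms(1,2) by (intro mult_left_mono) auto
  also have "\<dots> \<le> real r * (real i ^ r * f (S k))"
    using binomial_le_pow[of r i] r_less_k assms(1) greedy_output_nonneg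
    by (intro mult_left_mono mult_right_mono) (auto simp flip: of_nat_power)
  finally have main: "(real k / real r) ^ r * (real i * \<tau>) \<le> real r * (real i ^ r * f (S k))" .
  define c where "c = real i * real k ^ q / real r ^ r"
  have "0 < c" using assms(1) r_less_k q by (simp add: c_def)
  have "(real k / real r) ^ r * (real i * \<tau>) = (real k * \<tau>) * c"
    using q by (simp add: c_def power_divide)
  moreover have "real r * (real i ^ r * f (S k))
      = (real r ^ (r + 1) * (real i / real k) ^ q * f (S k)) * c"
    using q r_less_k by (simp add: c_def power_divide)
  ultimately have "(real k * \<tau>) * c \<le> (real r ^ (r + 1) * (real i / real k) ^ q * f (S k)) * c"
    using main by (simp only:)
  then have "real k * \<tau> \<le> real r ^ (r + 1) * (real i / real k) ^ q * f (S k)"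
    using \<open>0 < c\<close> by simp
  also have "\<dots> \<le> real r ^ (r + 1) * (real (card V) / real k) ^ q * f (S k)"
    using assms(2) greedy_output_nonneg
    by (intro mult_right_mono mult_left_mono power_mono divide_right_mono) auto
  finally show ?thesis by (simp add: q)
qed

lemma escaping_subset_bound:
  assumes "Z \<subseteq> V" "\<not> Z \<subseteq> S k" "0 < \<tau>" "\<forall>v\<in>Z. \<tau> \<le> marginal f v (Z - {v})"
  shows "real k * \<tau> \<le> real r ^ (r + 1) * (real (card V) / real k) ^ (r - 1) * f (S k)"
proof -
  obtain i where i: "k < i" "i \<le> card V" "Z \<subseteq> S i" "\<not> Z \<subseteq> S (i - 1)"
  proof -
    have "Z \<subseteq> S (k + (card V - k))"
      using assms(1) k_less_card greedy_start by simp
    moreover have "\<not> Z \<subseteq> S (k + 0)" using assms(2) by simp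
    ultimately obtain d where "d < card V - k" "\<forall>j\<le>d. \<not> Z \<subseteq> S (k + j)" "Z \<subseteq> S (k + Suc d)"
      using ex_least_nat_less[of "\<lambda>d. Z \<subseteq> S (k + d)"] by blast
    then show thesis by (intro that[of "k + Suc d"]) auto
  qed
  obtain v where v_min: "\<forall>u\<in>S i. marginal f v (S i - {v}) \<le> marginal f u (S i - {u})"
    and S_prev: "S (i - 1) = S i - {v}"
    using greedy_step[OF i(1,2)] by metis
  have "v \<in> Z" using i(3,4) unfolding S_prev by blast
  have "S i \<subseteq> V" using greedy_set i(1,2) by simp
  have "\<tau> \<le> marginal f v (Z - {v})" using assms(4) \<open>v \<in> Z\<close> by blast
  also have "\<dots> \<le> marginal f v (S i - {v})"
    by (rule supermodular_on_marginal_mono[OF supermodular \<open>S i \<subseteq> V\<close> i(3) \<open>v \<in> Z\<close>])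
  finally have \<tau>_v: "\<tau> \<le> marginal f v (S i - {v})" .
  have "\<tau> \<le> marginal f u (S i - {u})" if "u \<in> S i" for u
    using order_trans[OF \<tau>_v] v_min that by blast
  then show ?thesis
    by (intro greedy_min_gain_bound[OF i(1,2) assms(3)]) blast
qed

lemma feasible_value_le:
  assumes "X \<subseteq> V" "card X \<le> k"
  shows "f X \<le> max (2 * f (S k) + 2 * f {})
    (2 * real r ^ (r + 1) * (real (card V) / real k) ^ (r - 1) * f (S k))"
proof (cases "0 < f X")
  case False
  have "0 \<le> f {}" by (rule nonneg_onD[OF nonneg]) simp
  with False greedy_output_nonneg have "f X \<le> 2 * f (S k) + 2 * f {}" by linarith
  then show ?thesis by (rule max.coboundedI1)
next
  case True
  define \<tau> where "\<tau> = f X / (2 * real k)"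
  have "0 < \<tau>" using True r_less_k by (simp add: \<tau>_def)
  have k\<tau>: "real k * \<tau> = f X / 2" using r_less_k by (simp add: \<tau>_def)
  obtain Z where Z: "Z \<subseteq> X" "f X - real (card X) * \<tau> \<le> f Z - real (card Z) * \<tau>"
    "\<forall>v\<in>Z. \<tau> \<le> marginal f v (Z - {v})"
    using exists_subset_marginals_ge finite_subset[OF assms(1) finite_V] by blast
  have "real (card X) * \<tau> \<le> real k * \<tau>"
    using assms(2) \<open>0 < \<tau>\<close> by (intro mult_right_mono) auto
  moreover have "0 \<le> real (card Z) * \<tau>" using \<open>0 < \<tau>\<close> by simp
  ultimately have "f X \<le> 2 * f Z"
    using Z(2) k\<tau> by linarith
  show ?thesis
  proof (cases "Z \<subseteq> S k")
    case True
    then have "f Z \<le> f (S k) + f {}"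
      using greedy_set[of k] k_less_card
      by (intro supermodular_on_subset_le[OF supermodular nonneg]) auto
    then show ?thesis
      using \<open>f X \<le> 2 * f Z\<close> by (intro max.coboundedI1) linarith
  next
    case False
    then have "real k * \<tau> \<le> real r ^ (r + 1) * (real (card V) / real k) ^ (r - 1) * f (S k)"
      using escaping_subset_bound Z(1,3) assms(1) \<open>0 < \<tau>\<close> by blast
    then show ?thesis
      using k\<tau> by (intro max.coboundedI2) linarith
  qed
qed

theorem greedy_approximation:
  assumes "X \<subseteq> V" "card X \<le> k"
  shows "f X \<le> (4 + 2 * real r ^ (r + 1)) * (real (card V) / real k) ^ (r - 1) * greedy_value f k S"
proof -
  define \<rho> where "\<rho> = (real (card V) / real k) ^ (r - 1)"
  define val where "val = greedy_value f k S"
  have "1 \<le> \<rho>"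
    using k_less_card r_less_k by (simp add: \<rho>_def one_le_power)
  have val_ge: "f (S k) \<le> val" "f {} \<le> val"
    by (simp_all add: val_def greedy_value_def)
  have "0 \<le> val" using greedy_output_nonneg val_ge by linarith
  have "2 * f (S k) + 2 * f {} \<le> 4 * (\<rho> * val)"
    using val_ge mult_right_mono[OF \<open>1 \<le> \<rho>\<close> \<open>0 \<le> val\<close>] by linarith
  moreover have "2 * real r ^ (r + 1) * \<rho> * f (S k) \<le> 2 * real r ^ (r + 1) * \<rho> * val"
    using val_ge(1) \<open>1 \<le> \<rho>\<close> by (intro mult_left_mono) auto
  moreover have "0 \<le> 4 * (\<rho> * val)" "0 \<le> 2 * real r ^ (r + 1) * \<rho> * val"
    using \<open>0 \<le> val\<close> \<open>1 \<le> \<rho>\<close> by auto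
  ultimately have "f X \<le> 4 * (\<rho> * val) + 2 * real r ^ (r + 1) * \<rho> * val"
    using feasible_value_le[OF assms] unfolding \<rho>_def[symmetric] by linarith
  then show ?thesis
    by (simp add: \<rho>_def val_def algebra_simps)
qed

end

theorem corollary5:
  fixes r :: nat
  shows "\<exists>C::real. C > 0 \<and>
    (\<forall>(V::nat set) (f::nat set \<Rightarrow> real) (k::nat) (S::nat \<Rightarrow> nat set).
       finite V \<longrightarrow> nonneg_on V f \<longrightarrow> supermodular_on V f \<longrightarrow> decomposable r V f \<longrightarrow>
       r < k \<longrightarrow> k \<le> card V - 1 \<longrightarrow> greedy_run V f k S \<longrightarrow>
       (\<forall>X. X \<subseteq> V \<longrightarrow> card X \<le> k \<longrightarrow>
          f X \<le> C * (real (card V) / real k) ^ (r - 1) * greedy_value f k S))"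
proof (intro exI conjI allI impI)
  show "(0::real) < 4 + 2 * real r ^ (r + 1)"
    by (simp add: add_pos_nonneg)
  fix V :: "nat set" and f :: "nat set \<Rightarrow> real" and k :: nat and S :: "nat \<Rightarrow> nat set" and X
  assume "finite V" "nonneg_on V f" "supermodular_on V f" "decomposable r V f" "r < k"
    "k \<le> card V - 1" "greedy_run V f k S" "X \<subseteq> V" "card X \<le> k"
  then interpret decomposable_backward_greedy V f k S r
    by unfold_locales auto
  show "f X \<le> (4 + 2 * real r ^ (r + 1)) * (real (card V) / real k) ^ (r - 1) * greedy_value f k S"
    using greedy_approximation \<open>X \<subseteq> V\<close> \<open>card X \<le> k\<close> .
qed

end
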